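(* Let $\mathcal{C}=(\mathcal{T},\mathcal{I},\mathcal{R})$ be an extraction context with thresholds \textit{minsupp} and \textit{minbond}. Then $\mathcal{MM}ax\mathcal{CR}=\mathcal{MRCP}\cup\mathcal{M}ax\mathcal{CRCP}$, with each element $J$ recorded together with $\mathit{Supp}(\wedge J)$ and $\mathit{bond}(J)$, is an exact concise representation of the set $\mathcal{RCP}$ of rare correlated patterns.
   Context: An extraction context is a triple $\mathcal{C}=(\mathcal{T},\mathcal{I},\mathcal{R})$ with $\mathcal{T}$ a finite set of transactions, $\mathcal{I}$ a finite set of items and $\mathcal{R}\subseteq\mathcal{T}\times\mathcal{I}$. For a pattern $I\subseteq\mathcal{I}$: $\mathit{Supp}(\wedge I)=|\{t:\forall i\in I,(t,i)\in\mathcal{R}\}|$, $\mathit{Supp}(\vee I)=|\{t:\exists i\in I,(t,i)\in\mathcal{R}\}|$, and for nonempty $I$, $\mathit{bond}(I)=\mathit{Supp}(\wedge I)/\mathit{Supp}(\vee I)$ (with $\mathit{bond}(\emptyset)=+\infty$ by convention). $\mathcal{CP}=\{I:\mathit{bond}(I)\ge\textit{minbond}\}$; $\mathcal{RCP}=\{I\in\mathcal{CP}:\mathit{Supp}(\wedge I)<\textit{minsupp}\}$. $\mathcal{CRCP}=\{I\in\mathcal{RCP}:\forall I_1\supsetneq I,\ \mathit{bond}(I)>\mathit{bond}(I_1)\}$; $\mathcal{MRCP}=\{I\in\mathcal{RCP}:\forall I_1\subsetneq I,\ \mathit{bond}(I)<\mathit{bond}(I_1)\}$. Maximal correlated patterns: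 $\mathcal{M}ax\mathcal{CP}=\{I\in\mathcal{CP}:\forall I_1\supsetneq I,\ \mathit{bond}(I_1)<\textit{minbond}\}$. $\mathcal{M}ax\mathcal{CRCP}=\mathcal{CRCP}\cap\mathcal{M}ax\mathcal{CP}$. A family $\mathcal{S}\subseteq\mathcal{RCP}$, with each $J\in\mathcal{S}$ recorded together with $\mathit{Supp}(\wedge J)$ and $\mathit{bond}(J)$, is an exact concise representation of $\mathcal{RCP}$ if, for every pattern $I\subseteq\mathcal{I}$, the recorded data alone suffice to decide whether $I\in\mathcal{RCP}$ and, when $I\in\mathcal{RCP}$, to determine exactly $\mathit{Supp}(\wedge I)$ and $\mathit{bond}(I)$. *)

theory Defs
  imports Main "HOL-Library.Extended_Real"
begin

definition extraction_context :: "'t set \<Rightarrow> 'i set \<Rightarrow> ('t \<times> 'i) set \<Rightarrow> bool" where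
  "extraction_context T Is R \<longleftrightarrow> finite T \<and> finite Is \<and> R \<subseteq> T \<times> Is"

definition supp_conj :: "'t set \<Rightarrow> ('t \<times> 'i) set \<Rightarrow> 'i set \<Rightarrow> nat" where
  "supp_conj T R I = card {t \<in> T. \<forall>i\<in>I. (t, i) \<in> R}"

definition supp_disj :: "'t set \<Rightarrow> ('t \<times> 'i) set \<Rightarrow> 'i set \<Rightarrow> nat" where
  "supp_disj T R I = card {t \<in> T. \<exists>i\<in>I. (t, i) \<in> R}"

definition bond :: "'t set \<Rightarrow> ('t \<times> 'i) set \<Rightarrow> 'i set \<Rightarrow> ereal" where
  "bond T R I = (if I = {} then \<infinity>
                 else ereal (real (supp_conj T R I) / real (supp_disj T R I)))"

definition CP :: "'t set \<Rightarrow> 'i set \<Rightarrow> ('t \<times> 'i) set \<Rightarrow> real \<Rightarrow> 'i set set" where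
  "CP T Is R minbond = {I. I \<subseteq> Is \<and> bond T R I \<ge> ereal minbond}"

definition RCP :: "'t set \<Rightarrow> 'i set \<Rightarrow> ('t \<times> 'i) set \<Rightarrow> real \<Rightarrow> real \<Rightarrow> 'i set set" where
  "RCP T Is R minsupp minbond =
     {I \<in> CP T Is R minbond. real (supp_conj T R I) < minsupp}"

definition CRCP :: "'t set \<Rightarrow> 'i set \<Rightarrow> ('t \<times> 'i) set \<Rightarrow> real \<Rightarrow> real \<Rightarrow> 'i set set" where
  "CRCP T Is R minsupp minbond =
     {I \<in> RCP T Is R minsupp minbond.
        \<forall>I1. I1 \<subseteq> Is \<and> I \<subset> I1 \<longrightarrow> bond T R I > bond T R I1}"

definition MRCP :: "'t set \<Rightarrow> 'i set \<Rightarrow> ('t \<times> 'i) set \<Rightarrow> real \<Rightarrow> real \<Rightarrow> 'i set set" where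
  "MRCP T Is R minsupp minbond =
     {I \<in> RCP T Is R minsupp minbond.
        \<forall>I1. I1 \<subset> I \<longrightarrow> bond T R I < bond T R I1}"

definition MaxCP :: "'t set \<Rightarrow> 'i set \<Rightarrow> ('t \<times> 'i) set \<Rightarrow> real \<Rightarrow> 'i set set" where
  "MaxCP T Is R minbond =
     {I \<in> CP T Is R minbond.
        \<forall>I1. I1 \<subseteq> Is \<and> I \<subset> I1 \<longrightarrow> bond T R I1 < ereal minbond}"

definition MaxCRCP :: "'t set \<Rightarrow> 'i set \<Rightarrow> ('t \<times> 'i) set \<Rightarrow> real \<Rightarrow> real \<Rightarrow> 'i set set" where
  "MaxCRCP T Is R minsupp minbond = CRCP T Is R minsupp minbond \<inter> MaxCP T Is R minbond"

definition MMaxCR :: "'t set \<Rightarrow> 'i set \<Rightarrow> ('t \<times> 'i) set \<Rightarrow> real \<Rightarrow> real \<Rightarrow> 'i set set" where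
  "MMaxCR T Is R minsupp minbond = MRCP T Is R minsupp minbond \<union> MaxCRCP T Is R minsupp minbond"

definition recorded :: "'t set \<Rightarrow> ('t \<times> 'i) set \<Rightarrow> 'i set set \<Rightarrow> ('i set \<times> nat \<times> ereal) set" where
  "recorded T R S = {(J, supp_conj T R J, bond T R J) | J. J \<in> S}"

definition exact_concise_rep ::
  "real \<Rightarrow> real \<Rightarrow> ('t set \<Rightarrow> 'i set \<Rightarrow> ('t \<times> 'i) set \<Rightarrow> 'i set set) \<Rightarrow> bool" where
  "exact_concise_rep minsupp minbond rep \<longleftrightarrow>
     (\<forall>T Is R. extraction_context T Is R \<longrightarrow> rep T Is R \<subseteq> RCP T Is R minsupp minbond) \<and>
     (\<exists>Dec :: ('i set \<times> nat \<times> ereal) set \<Rightarrow> 'i set \<Rightarrow> (nat \<times> ereal) option.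
        \<forall>T Is R. extraction_context T Is R \<longrightarrow>
          (\<forall>I. I \<subseteq> Is \<longrightarrow>
             Dec (recorded T R (rep T Is R)) I =
               (if I \<in> RCP T Is R minsupp minbond
                then Some (supp_conj T R I, bond T R I) else None)))"

end

theory Submission
  imports Defs
begin

text \<open>
  The bond of a pattern is antitone with respect to inclusion, and two nested patterns
  with the same bond have the same conjunctive support. Hence RCP is convex, every
  rare correlated pattern I lies below a maximal one in MaxCRCP and above a minimal
  one in MRCP with the same bond, and the subpatterns of I recorded in the
  representation have bond at least bond(I), with equality attained by that minimal
  one. So I is in RCP iff it lies between two recorded patterns, and then its bond
  and conjunctive support are read off a recorded subpattern of least bond.
\<close>

lemma numerator_eq_if_divide_eq:
  fixes c c' d d' :: "'a::linordered_field"
  assumes "0 \<le> c'" "c' \<le> c" "c \<le> d" "d \<le> d'" "c / d = c' / d'"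
  shows "c' = c"
proof (cases "c = 0")
  case True
  then show ?thesis using assms(1,2) by simp
next
  case False
  then have "0 < c" "0 < d" using assms(1-3) by auto
  then have "0 < c' / d'" using assms(5) by (metis divide_pos_pos)
  then have "0 < d'" using assms(1) by (simp add: zero_less_divide_iff)
  then have "c * d' = c' * d" using assms(5) \<open>0 < d\<close> by (simp add: field_simps)
  also have "\<dots> \<le> c * d" using assms(2) \<open>0 < d\<close> by simp
  finally have "d' \<le> d" using \<open>0 < c\<close> by simp
  then have "d' = d" using assms(4) by simp
  then show ?thesis using assms(5) \<open>0 < d\<close> by simp
qed

lemma supp_conj_antimono: "finite T \<Longrightarrow> J \<subseteq> I \<Longrightarrow> supp_conj T R I \<le> supp_conj T R J"
  unfolding supp_conj_def by (rule card_mono) auto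

lemma supp_disj_mono: "finite T \<Longrightarrow> J \<subseteq> I \<Longrightarrow> supp_disj T R J \<le> supp_disj T R I"
  unfolding supp_disj_def by (rule card_mono) auto

lemma supp_conj_le_supp_disj: "finite T \<Longrightarrow> I \<noteq> {} \<Longrightarrow> supp_conj T R I \<le> supp_disj T R I"
  unfolding supp_conj_def supp_disj_def by (rule card_mono) auto

lemma bond_antimono:
  assumes "finite T" and "J \<subseteq> I"
  shows "bond T R I \<le> bond T R J"
proof (cases "J = {}")
  case True
  then show ?thesis by (simp add: bond_def)
next
  case False
  have conj: "supp_conj T R I \<le> supp_conj T R J"
    using supp_conj_antimono[OF assms] .
  have disj: "supp_disj T R J \<le> supp_disj T R I"
    using supp_disj_mono[OF assms] .
  have "real (supp_conj T R I) / supp_disj T R I \<le> real (supp_conj T R J) / supp_disj T R J"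
  proof (cases "supp_disj T R J = 0")
    case True
    then have "supp_conj T R I = 0"
      using conj supp_conj_le_supp_disj[OF assms(1) False, of R] by simp
    then show ?thesis by simp
  next
    case False
    then show ?thesis using conj disj by (intro frac_le) auto
  qed
  then show ?thesis using False assms(2) by (auto simp: bond_def)
qed

lemma supp_conj_eq_if_bond_eq:
  assumes "finite T" and "J \<subseteq> I" and "bond T R J = bond T R I"
  shows "supp_conj T R J = supp_conj T R I"
proof (cases "J = {}")
  case True
  then have "I = {}" using assms(3) by (simp add: bond_def split: if_splits)
  then show ?thesis using True by simp
next
  case False
  then have "I \<noteq> {}" using assms(2) by auto
  then have ratio:
      "real (supp_conj T R J) / supp_disj T R J = real (supp_conj T R I) / supp_disj T R I"
    using assms(3) False by (simp add: bond_def)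
  have "real (supp_conj T R I) \<le> real (supp_conj T R J)"
    using supp_conj_antimono[OF assms(1,2)] by simp
  moreover have "real (supp_conj T R J) \<le> real (supp_disj T R J)"
    using supp_conj_le_supp_disj[OF assms(1) False] by simp
  moreover have "real (supp_disj T R J) \<le> real (supp_disj T R I)"
    using supp_disj_mono[OF assms(1,2)] by simp
  ultimately have "real (supp_conj T R I) = real (supp_conj T R J)"
    using numerator_eq_if_divide_eq[OF of_nat_0_le_iff _ _ _ ratio] by blast
  then show ?thesis by simp
qed

lemma RCP_convex:
  assumes "finite T" and "J \<in> RCP T Is R minsupp minbond" and "K \<in> RCP T Is R minsupp minbond"
    and "J \<subseteq> I" and "I \<subseteq> K"
  shows "I \<in> RCP T Is R minsupp minbond"
  using assms bond_antimono[OF assms(1,5), of R] supp_conj_antimono[OF assms(1,4), of R]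
  by (fastforce simp: RCP_def CP_def)

lemma exists_minimal_subset_bond_eq:
  assumes "finite T" and "finite I"
  obtains J where "J \<subseteq> I" "bond T R J = bond T R I"
    "\<And>J'. J' \<subset> J \<Longrightarrow> bond T R J < bond T R J'"
proof -
  let ?A = "{J. J \<subseteq> I \<and> bond T R J = bond T R I}"
  have "finite ?A" using assms(2) by (auto intro: finite_subset[of _ "Pow I"])
  then obtain J where J: "J \<in> ?A" and minimal: "\<And>J'. J' \<in> ?A \<Longrightarrow> J' \<subseteq> J \<Longrightarrow> J = J'"
    using finite_has_minimal2[of ?A I] by auto
  have "bond T R J < bond T R J'" if "J' \<subset> J" for J'
  proof -
    have "bond T R J \<noteq> bond T R J'"
      using minimal[of J'] J that by auto
    then show ?thesis using bond_antimono[OF assms(1), of J' J R] that by auto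
  qed
  then show ?thesis using that J by blast
qed

lemma exists_MRCP_subset_bond_eq:
  assumes "extraction_context T Is R" and I: "I \<in> RCP T Is R minsupp minbond"
  obtains J where "J \<in> MRCP T Is R minsupp minbond" "J \<subseteq> I" "bond T R J = bond T R I"
proof -
  have "finite T" "finite I"
    using assms I by (auto simp: extraction_context_def RCP_def CP_def intro: finite_subset)
  then obtain J where J: "J \<subseteq> I" "bond T R J = bond T R I"
    and strict: "\<And>J'. J' \<subset> J \<Longrightarrow> bond T R J < bond T R J'"
    using exists_minimal_subset_bond_eq[where R = R] by metis
  have "J \<in> RCP T Is R minsupp minbond"
    using I J supp_conj_eq_if_bond_eq[OF \<open>finite T\<close> J] by (auto simp: RCP_def CP_def)
  then show ?thesis using that J strict by (auto simp: MRCP_def)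
qed

lemma exists_MaxCP_superset:
  assumes "finite Is" and "I \<in> CP T Is R minbond"
  obtains K where "K \<in> MaxCP T Is R minbond" "I \<subseteq> K"
proof -
  have "finite (CP T Is R minbond)"
    using assms(1) by (auto simp: CP_def intro: finite_subset[of _ "Pow Is"])
  then obtain K where K: "K \<in> CP T Is R minbond" "I \<subseteq> K"
    and maximal: "\<And>K'. K' \<in> CP T Is R minbond \<Longrightarrow> K \<subseteq> K' \<Longrightarrow> K = K'"
    using finite_has_maximal2[OF _ assms(2)] by auto
  have "bond T R K' < ereal minbond" if "K' \<subseteq> Is" "K \<subset> K'" for K'
  proof (rule ccontr)
    assume "\<not> bond T R K' < ereal minbond"
    then have "K' \<in> CP T Is R minbond" using that(1) by (simp add: CP_def)
    then show False using maximal that(2) by blast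
  qed
  then have "K \<in> MaxCP T Is R minbond" using K(1) by (simp add: MaxCP_def)
  then show ?thesis using that K(2) by blast
qed

lemma MaxCP_superset_of_RCP_in_MaxCRCP:
  assumes "finite T" and I: "I \<in> RCP T Is R minsupp minbond"
    and K: "K \<in> MaxCP T Is R minbond" and "I \<subseteq> K"
  shows "K \<in> MaxCRCP T Is R minsupp minbond"
proof -
  have K_CP: "K \<in> CP T Is R minbond" and
    K_max: "\<And>K'. K' \<subseteq> Is \<Longrightarrow> K \<subset> K' \<Longrightarrow> bond T R K' < ereal minbond"
    using K by (auto simp: MaxCP_def)
  have "supp_conj T R K \<le> supp_conj T R I"
    using supp_conj_antimono[OF assms(1,4)] .
  then have "K \<in> RCP T Is R minsupp minbond"
    using I K_CP by (simp add: RCP_def)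
  moreover have "bond T R K' < bond T R K" if "K' \<subseteq> Is" "K \<subset> K'" for K'
    using K_max[OF that] K_CP by (simp add: CP_def less_le_trans)
  ultimately show ?thesis using K by (simp add: MaxCRCP_def CRCP_def)
qed

lemma MMaxCR_subset_RCP: "MMaxCR T Is R minsupp minbond \<subseteq> RCP T Is R minsupp minbond"
  by (auto simp: MMaxCR_def MRCP_def MaxCRCP_def CRCP_def)

lemma RCP_iff_between_MMaxCR:
  assumes ctx: "extraction_context T Is R"
  shows "I \<in> RCP T Is R minsupp minbond \<longleftrightarrow>
    (\<exists>J \<in> MMaxCR T Is R minsupp minbond. J \<subseteq> I) \<and> (\<exists>K \<in> MMaxCR T Is R minsupp minbond. I \<subseteq> K)"
proof
  assume I: "I \<in> RCP T Is R minsupp minbond"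
  have "finite T" "finite Is" using ctx by (auto simp: extraction_context_def)
  obtain J where "J \<in> MRCP T Is R minsupp minbond" "J \<subseteq> I"
    using exists_MRCP_subset_bond_eq[OF ctx I] .
  moreover have "I \<in> CP T Is R minbond" using I by (simp add: RCP_def)
  then obtain K where "K \<in> MaxCP T Is R minbond" "I \<subseteq> K"
    using exists_MaxCP_superset[OF \<open>finite Is\<close>] by blast
  ultimately show "(\<exists>J \<in> MMaxCR T Is R minsupp minbond. J \<subseteq> I) \<and>
      (\<exists>K \<in> MMaxCR T Is R minsupp minbond. I \<subseteq> K)"
    using MaxCP_superset_of_RCP_in_MaxCRCP[OF \<open>finite T\<close> I] by (auto simp: MMaxCR_def)
next
  assume "(\<exists>J \<in> MMaxCR T Is R minsupp minbond. J \<subseteq> I) \<and>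
      (\<exists>K \<in> MMaxCR T Is R minsupp minbond. I \<subseteq> K)"
  then obtain J K where JK: "J \<in> RCP T Is R minsupp minbond" "K \<in> RCP T Is R minsupp minbond"
    "J \<subseteq> I" "I \<subseteq> K"
    using MMaxCR_subset_RCP by blast
  have "finite T" using ctx by (simp add: extraction_context_def)
  then show "I \<in> RCP T Is R minsupp minbond"
    using RCP_convex JK by blast
qed

lemma mem_recorded_iff:
  "(J, p) \<in> recorded T R S \<longleftrightarrow> J \<in> S \<and> p = (supp_conj T R J, bond T R J)"
  by (auto simp: recorded_def)

lemma fst_image_recorded: "fst ` recorded T R S = S"
  by (force simp: recorded_def)

definition least_bond_below :: "('i set \<times> nat \<times> ereal) set \<Rightarrow> 'i set \<Rightarrow> nat \<times> ereal \<Rightarrow> bool" where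
  "least_bond_below D I p \<longleftrightarrow>
     (\<exists>J. (J, p) \<in> D \<and> J \<subseteq> I) \<and> (\<forall>J p'. (J, p') \<in> D \<and> J \<subseteq> I \<longrightarrow> snd p \<le> snd p')"

lemma least_bond_below_recorded_iff:
  assumes "finite T" and "J \<in> S" "J \<subseteq> I" "bond T R J = bond T R I"
  shows "least_bond_below (recorded T R S) I p \<longleftrightarrow> p = (supp_conj T R I, bond T R I)"
proof
  assume "least_bond_below (recorded T R S) I p"
  then obtain J' where J': "J' \<in> S" "J' \<subseteq> I" "p = (supp_conj T R J', bond T R J')"
    and least: "snd p \<le> bond T R J"
    using assms(2,3) by (fastforce simp: least_bond_below_def mem_recorded_iff)
  have "bond T R J' = bond T R I"
    using least J' assms(4) bond_antimono[OF assms(1) J'(2), of R] by simp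
  then show "p = (supp_conj T R I, bond T R I)"
    using J' supp_conj_eq_if_bond_eq[OF assms(1) J'(2)] by simp
next
  assume "p = (supp_conj T R I, bond T R I)"
  then show "least_bond_below (recorded T R S) I p"
    using assms supp_conj_eq_if_bond_eq[OF assms(1,3,4)] bond_antimono[OF assms(1)]
    by (fastforce simp: least_bond_below_def mem_recorded_iff)
qed

text \<open>The choice is only made when I lies between two recorded patterns; for the recorded
  data of MMaxCR the least-bond entry below I is then unique.\<close>
definition decode :: "('i set \<times> nat \<times> ereal) set \<Rightarrow> 'i set \<Rightarrow> (nat \<times> ereal) option" where
  "decode D I =
     (if (\<exists>J \<in> fst ` D. J \<subseteq> I) \<and> (\<exists>K \<in> fst ` D. I \<subseteq> K)
      then Some (SOME p. least_bond_below D I p) else None)"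

lemma decode_recorded_MMaxCR:
  assumes ctx: "extraction_context T Is R"
  shows "decode (recorded T R (MMaxCR T Is R minsupp minbond)) I =
    (if I \<in> RCP T Is R minsupp minbond then Some (supp_conj T R I, bond T R I) else None)"
proof -
  let ?S = "MMaxCR T Is R minsupp minbond"
  have between:
    "(\<exists>J \<in> fst ` recorded T R ?S. J \<subseteq> I) \<and> (\<exists>K \<in> fst ` recorded T R ?S. I \<subseteq> K)
      \<longleftrightarrow> I \<in> RCP T Is R minsupp minbond"
    unfolding fst_image_recorded RCP_iff_between_MMaxCR[OF ctx] ..
  show ?thesis
  proof (cases "I \<in> RCP T Is R minsupp minbond")
    case False
    then show ?thesis using between by (simp add: decode_def)
  next
    case True
    have "finite T" using ctx by (simp add: extraction_context_def)
    obtain J where J: "J \<in> MRCP T Is R minsupp minbond" "J \<subseteq> I" "bond T R J = bond T R I"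
      using exists_MRCP_subset_bond_eq[OF ctx True] .
    then have "J \<in> ?S" by (simp add: MMaxCR_def)
    then have "(SOME p. least_bond_below (recorded T R ?S) I p) = (supp_conj T R I, bond T R I)"
      using least_bond_below_recorded_iff[OF \<open>finite T\<close> _ J(2,3)] by simp
    then show ?thesis using True between by (simp add: decode_def)
  qed
qed

theorem mainTheorem6:
  fixes minsupp minbond :: real
  shows "exact_concise_rep minsupp minbond
           (\<lambda>(T :: 't set) (Is :: 'i set) R. MMaxCR T Is R minsupp minbond)"
  unfolding exact_concise_rep_def
  by (intro conjI exI[of _ decode] allI impI)
    (simp_all add: MMaxCR_subset_RCP decode_recorded_MMaxCR)

end
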